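(* Let $\mathcal{W}$ be a finite vocabulary, $\mathbf{P}$ a probability vector on $\mathcal{W}$, and $\Delta=1-\max_w P_w$. There is a constant $c\in(0,1)$ such that whenever $\Delta\le c$: (1) $\mathbb{E}_{1,\mathbf{P}}h_{\mathrm{ars}}(Y)-\mathbb{E}_0h_{\mathrm{ars}}(Y)$ lies between positive constant multiples of $\mathrm{Ent}(\mathbf{P})$, and $\mathrm{Ent}(\mathbf{P})$ lies between positive constant multiples of $\Delta\log\frac1\Delta$; (2) $\mathbb{E}_{1,\mathbf{P}}h_{\log}(Y)-\mathbb{E}_0h_{\log}(Y)=1-\sum_w P_w^2$, which lies between positive constant multiples of $\Delta$; (3) for $\delta\in(0,1)$, $\mathbb{E}_{1,\mathbf{P}}h_{\mathrm{ind},\delta}(Y)-\mathbb{E}_0h_{\mathrm{ind},\delta}(Y)=\delta-F_{1,\mathbf{P}}(\delta)$, which lies between positive constant multiples of $\Delta$; (4) for $\Delta_0\in(0,1)$, $\mathbb{E}_{1,\mathbf{P}}h_{\mathrm{opt},\Delta_0}(Y)-\mathbb{E}_0h_{\mathrm{opt},\Delta_0}(Y)$ lies between positive constant multiples of $\Delta$. Here the constants depend only on $c$, and additionally on $\log|\mathcal{W}|$ in (1), on $\delta$ in (3), and on $\Delta_0$ in (4).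
   Context: $\mu_0=U(0,1)$ and $\mathbb{E}_0$ is expectation for $Y\sim\mu_0$; $\mu_{1,\mathbf{P}}$ is the distribution on $[0,1]$ with CDF $F_{1,\mathbf{P}}(r)=\sum_w P_w r^{1/P_w}$ and density $f_{1,\mathbf{P}}(r)=\sum_{w:P_w>0}r^{1/P_w-1}$, and $\mathbb{E}_{1,\mathbf{P}}$ is expectation for $Y\sim\mu_{1,\mathbf{P}}$. $\mathrm{Ent}(\mathbf{P})=-\sum_wP_w\log P_w$. Score functions on $[0,1]$: $h_{\mathrm{ars}}(y)=-\log(1-y)$; $h_{\log}(y)=\log y$; $h_{\mathrm{ind},\delta}(y)=\mathbf{1}\{y\ge\delta\}$; $h_{\mathrm{opt},\Delta_0}(y)=\log f_{1,\mathbf{P}^\star_{\Delta_0}}(y)$, where $\mathbf{P}^\star_{\Delta_0}=(1-\Delta_0,\dots,1-\Delta_0,\,1-(1-\Delta_0)\lfloor\frac{1}{1-\Delta_0}\rfloor,0,\dots)$ with $1-\Delta_0$ repeated $\lfloor\frac1{1-\Delta_0}\rfloor$ times (for $\Delta_0<1/2$ this gives $h_{\mathrm{opt},\Delta_0}(y)=\log(y^{\Delta_0/(1-\Delta_0)}+y^{1/\Delta_0-1})$). *)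

theory Defs
  imports "HOL-Probability.Probability"
begin

definition prob_vec :: "nat set \<Rightarrow> (nat \<Rightarrow> real) \<Rightarrow> bool" where
  "prob_vec W P \<longleftrightarrow> finite W \<and> W \<noteq> {} \<and> (\<forall>w\<in>W. 0 \<le> P w) \<and> (\<Sum>w\<in>W. P w) = 1"

definition Delta :: "nat set \<Rightarrow> (nat \<Rightarrow> real) \<Rightarrow> real" where
  "Delta W P = 1 - Max (P ` W)"

definition Ent :: "nat set \<Rightarrow> (nat \<Rightarrow> real) \<Rightarrow> real" where
  "Ent W P = - (\<Sum>w\<in>W. P w * ln (P w))"

definition F1 :: "nat set \<Rightarrow> (nat \<Rightarrow> real) \<Rightarrow> real \<Rightarrow> real" where
  "F1 W P r = (\<Sum>w\<in>W. P w * r powr (1 / P w))"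

definition f1 :: "nat set \<Rightarrow> (nat \<Rightarrow> real) \<Rightarrow> real \<Rightarrow> real" where
  "f1 W P r = (\<Sum>w\<in>{w\<in>W. P w > 0}. r powr (1 / P w - 1))"

definition mu0 :: "real measure" where
  "mu0 = density lborel (\<lambda>y. ennreal (indicator {0..1} y))"

definition mu1 :: "nat set \<Rightarrow> (nat \<Rightarrow> real) \<Rightarrow> real measure" where
  "mu1 W P = density lborel (\<lambda>y. ennreal (indicator {0..1} y * f1 W P y))"

definition E0 :: "(real \<Rightarrow> real) \<Rightarrow> real" where
  "E0 h = integral\<^sup>L mu0 h"

definition E1 :: "nat set \<Rightarrow> (nat \<Rightarrow> real) \<Rightarrow> (real \<Rightarrow> real) \<Rightarrow> real" where
  "E1 W P h = integral\<^sup>L (mu1 W P) h"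

definition h_ars :: "real \<Rightarrow> real" where
  "h_ars y = - ln (1 - y)"

definition h_log :: "real \<Rightarrow> real" where
  "h_log y = ln y"

definition h_ind :: "real \<Rightarrow> real \<Rightarrow> real" where
  "h_ind \<delta> y = (if y \<ge> \<delta> then 1 else 0)"

definition Pstar :: "real \<Rightarrow> nat \<Rightarrow> real" where
  "Pstar D0 i = (let k = nat \<lfloor>1 / (1 - D0)\<rfloor> in
     if i < k then 1 - D0 else if i = k then 1 - (1 - D0) * real k else 0)"

definition h_opt :: "real \<Rightarrow> real \<Rightarrow> real" where
  "h_opt D0 y = ln (f1 {0..nat \<lfloor>1 / (1 - D0)\<rfloor>} (Pstar D0) y)"

end

theory Submission
  imports Defs "HOL-Real_Asymp.Real_Asymp"
begin

text \<open>The density of \<open>mu1 W P\<close> is \<open>\<Sum>\<^sub>w x powr (1 / P w - 1)\<close>, so \<open>E1 W P h - E0 h\<close> is a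
  sum over the support of per-token gaps \<open>beta_gap h (1 / P w)\<close>, and integration by parts turns
  \<open>a * beta_gap h a\<close> into \<open>\<integral>\<^sub>0\<^sup>1 h'(x) (x - x powr a) dx\<close>. For \<open>h_log\<close> and \<open>h_opt\<close>, which are
  logarithms of sums of powers of \<open>x\<close>, the function \<open>x h'(x)\<close> is pinched between positive
  constants, so the gap is comparable to \<open>\<Sum>\<^sub>w P w (1 - P w) = 1 - \<Sum>\<^sub>w (P w)\<^sup>2\<close>, which lies
  between \<open>\<Delta>\<close> and \<open>2 \<Delta>\<close>. For \<open>h_ind\<close> the per-token gap is explicit. For \<open>h_ars\<close>,
  \<open>a * beta_gap h_ars a\<close> lies between \<open>ln a - 1\<close> and \<open>2 ln a\<close>, which makes the gap comparable
  to the entropy. All masses except the mode are at most \<open>\<Delta>\<close> and sum to \<open>\<Delta>\<close>; this squeezes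
  the entropy between \<open>\<Delta> ln (1 / \<Delta>)\<close> and \<open>\<Delta> ln (card W / \<Delta>) + \<Delta>\<close>.\<close>

section \<open>Integrals over the open unit interval\<close>

lemma set_integrable_unit_interval_bound:
  fixes f g :: "real \<Rightarrow> real"
  assumes "set_integrable lborel {0<..<1} f" "g \<in> borel_measurable borel"
    and "\<And>x. 0 < x \<Longrightarrow> x < 1 \<Longrightarrow> \<bar>g x\<bar> \<le> \<bar>f x\<bar>"
  shows "set_integrable lborel {0<..<1} g"
proof (rule set_integrable_bound[OF assms(1)])
  show "set_borel_measurable lborel {0<..<1} g"
    unfolding set_borel_measurable_def using assms(2) by measurable
  show "AE x\<in>{0<..<1} in lborel. norm (g x) \<le> norm (f x)"
    using assms(3) by auto
qed

lemma set_integrable_unit_interval_continuous_on: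
  fixes f :: "real \<Rightarrow> real"
  assumes "continuous_on {0..1} f"
  shows "set_integrable lborel {0<..<1} f"
  using borel_integrable_atLeastAtMost'[OF assms] by (rule set_integrable_subset) auto

lemma set_integrable_unit_interval_const: "set_integrable lborel {0<..<1::real} (\<lambda>_. c :: real)"
  by (rule set_integrable_unit_interval_continuous_on) (rule continuous_on_const)

lemma set_integral_sum:
  fixes f :: "'i \<Rightarrow> 'a \<Rightarrow> real"
  assumes "\<And>i. i \<in> I \<Longrightarrow> set_integrable M A (f i)"
  shows "(LINT x:A|M. (\<Sum>i\<in>I. f i x)) = (\<Sum>i\<in>I. LINT x:A|M. f i x)"
  unfolding set_lebesgue_integral_def scaleR_sum_right
  by (rule Bochner_Integration.integral_sum) (use assms in \<open>auto simp: set_integrable_def\<close>)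

lemma set_integral_Ioo_FTC:
  fixes f F :: "real \<Rightarrow> real"
  assumes "u \<le> v" "continuous_on {u..v} f"
    and "\<And>x. u \<le> x \<Longrightarrow> x \<le> v \<Longrightarrow> (F has_real_derivative f x) (at x)"
  shows "(LBINT x:{u<..<v}. f x) = F v - F u"
proof -
  have "(LBINT x:{u<..<v}. f x) = (LBINT x:{u..v}. f x)"
    by (rule set_integral_discrete_difference[where X="{u, v}"]) auto
  also have "\<dots> = (LBINT x=ereal u..ereal v. f x)"
    using assms(1) by (simp add: interval_integral_Icc)
  also have "\<dots> = F v - F u"
    using assms by (intro interval_integral_FTC_finite)
      (auto simp: has_real_derivative_iff_has_vector_derivative has_vector_derivative_at_within)
  finally show ?thesis .
qed

lemma set_integral_unit_interval_FTC:
  fixes f F :: "real \<Rightarrow> real"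
  assumes "\<And>x. 0 < x \<Longrightarrow> x < 1 \<Longrightarrow> (F has_real_derivative f x) (at x)"
    and "\<And>x. 0 < x \<Longrightarrow> x < 1 \<Longrightarrow> isCont f x"
    and "set_integrable lborel {0<..<1} f"
    and "(F \<longlongrightarrow> A) (at_right 0)" "(F \<longlongrightarrow> B) (at_left 1)"
  shows "(LBINT x:{0<..<1}. f x) = B - A"
proof -
  have "(LBINT x=ereal 0..ereal 1. f x) = B - A"
    by (rule interval_integral_FTC_integrable)
      (use assms in \<open>auto simp: has_real_derivative_iff_has_vector_derivative ereal_tendsto_simps1\<close>)
  then show ?thesis by (simp add: interval_lebesgue_integral_def)
qed

lemma set_integrable_unit_interval_FTC_nonneg:
  fixes f F :: "real \<Rightarrow> real"
  assumes "\<And>x. 0 < x \<Longrightarrow> x < 1 \<Longrightarrow> (F has_real_derivative f x) (at x)"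
    and "\<And>x. 0 < x \<Longrightarrow> x < 1 \<Longrightarrow> isCont f x"
    and "\<And>x. 0 < x \<Longrightarrow> x < 1 \<Longrightarrow> 0 \<le> f x"
    and "(F \<longlongrightarrow> A) (at_right 0)" "(F \<longlongrightarrow> B) (at_left 1)"
  shows "set_integrable lborel {0<..<1} f"
proof -
  have "set_integrable lborel (einterval (ereal 0) (ereal 1)) f"
    by (rule interval_integral_FTC_nonneg) (use assms in \<open>auto simp: ereal_tendsto_simps1\<close>)
  then show ?thesis by simp
qed

lemma set_integral_unit_interval_powr:
  fixes b :: real
  assumes "-1 < b"
  shows "set_integrable lborel {0<..<1} (\<lambda>x. x powr b)"
    and "(LBINT x:{0<..<1}. x powr b) = 1 / (b + 1)"
proof -
  let ?F = "\<lambda>x::real. x powr (b + 1) / (b + 1)"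
  have deriv: "(?F has_real_derivative x powr b) (at x)" if "0 < x" for x
    using that assms by (auto intro!: derivative_eq_intros)
  have cont: "isCont (\<lambda>x. x powr b) x" if "0 < x" for x
    using that by (auto intro!: continuous_intros)
  have lim0: "(?F \<longlongrightarrow> 0) (at_right 0)"
    using assms by real_asymp
  have lim1: "(?F \<longlongrightarrow> 1 / (b + 1)) (at_left 1)"
    using assms by real_asymp (simp add: inverse_eq_divide)
  show int: "set_integrable lborel {0<..<1} (\<lambda>x. x powr b)"
    by (rule set_integrable_unit_interval_FTC_nonneg[OF deriv cont _ lim0 lim1]) auto
  show "(LBINT x:{0<..<1}. x powr b) = 1 / (b + 1)"
    using set_integral_unit_interval_FTC[OF deriv cont int lim0 lim1] by simp
qed

lemma set_integrable_unit_interval_ln: "set_integrable lborel {0<..<1} (ln :: real \<Rightarrow> real)"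
proof -
  have "set_integrable lborel {0<..<1} (\<lambda>x::real. - ln x)"
  proof (rule set_integrable_unit_interval_FTC_nonneg[where F="\<lambda>x. x - x * ln x"])
    fix x :: real assume x: "0 < x" "x < 1"
    show "((\<lambda>x. x - x * ln x) has_real_derivative - ln x) (at x)"
      using x by (auto intro!: derivative_eq_intros)
    show "isCont (\<lambda>x. - ln x) x" "0 \<le> - ln x"
      using x by (auto intro!: continuous_intros)
  qed real_asymp+
  from set_integrable_mult_right[OF this, of "-1"] show ?thesis by simp
qed

section \<open>Gaps between the Beta and uniform expectations\<close>

lemma prob_vec_le_one:
  assumes "prob_vec W P" "w \<in> W"
  shows "P w \<le> 1"
proof -
  have "P w \<le> (\<Sum>w\<in>W. P w)"
    using assms unfolding prob_vec_def by (intro member_le_sum) auto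
  then show ?thesis using assms unfolding prob_vec_def by simp
qed

lemma prob_vec_sum_support:
  assumes "prob_vec W P" and "\<And>w. w \<in> W \<Longrightarrow> P w = 0 \<Longrightarrow> f w = 0"
  shows "(\<Sum>w\<in>{w\<in>W. P w > 0}. f w) = (\<Sum>w\<in>W. f w)"
  using assms unfolding prob_vec_def
  by (intro sum.mono_neutral_left) (auto simp: order.strict_iff_not)

lemma prob_vec_sum_support_eq_one:
  assumes "prob_vec W P"
  shows "(\<Sum>w\<in>{w\<in>W. P w > 0}. P w) = 1"
  using prob_vec_sum_support[OF assms, of P] assms unfolding prob_vec_def by simp

lemma E0_eq_set_integral:
  assumes [measurable]: "g \<in> borel_measurable borel"
  shows "E0 g = (LBINT x:{0<..<1}. g x)"
proof -
  have "E0 g = (LBINT x:{0..1}. g x)"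
    unfolding E0_def mu0_def set_lebesgue_integral_def by (rule integral_density) auto
  also have "\<dots> = (LBINT x:{0<..<1}. g x)"
    by (rule set_integral_discrete_difference[where X="{0, 1}"]) auto
  finally show ?thesis .
qed

lemma f1_borel_measurable [measurable]: "f1 W P \<in> borel_measurable borel"
  unfolding f1_def by measurable

lemma E1_eq_sum_set_integral:
  assumes [measurable]: "g \<in> borel_measurable borel"
    and g: "set_integrable lborel {0<..<1} g"
    and P: "\<And>w. w \<in> W \<Longrightarrow> P w \<le> 1"
  shows "E1 W P g = (\<Sum>w\<in>{w\<in>W. P w > 0}. LBINT x:{0<..<1}. x powr (1 / P w - 1) * g x)"
proof -
  have "E1 W P g = (LBINT x:{0..1}. f1 W P x * g x)"
    unfolding E1_def mu1_def set_lebesgue_integral_def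
    by (subst integral_density) (auto simp: f1_def mult.assoc intro!: AE_I2 mult_nonneg_nonneg sum_nonneg)
  also have "\<dots> = (LBINT x:{0<..<1}. f1 W P x * g x)"
    by (rule set_integral_discrete_difference[where X="{0, 1}"]) auto
  also have "\<dots> = (\<Sum>w\<in>{w\<in>W. P w > 0}. LBINT x:{0<..<1}. x powr (1 / P w - 1) * g x)"
    unfolding f1_def sum_distrib_right
  proof (rule set_integral_sum)
    fix w assume "w \<in> {w\<in>W. P w > 0}"
    then have e: "0 \<le> 1 / P w - 1" using P by (auto simp: field_simps)
    show "set_integrable lborel {0<..<1} (\<lambda>x. x powr (1 / P w - 1) * g x)"
    proof (rule set_integrable_unit_interval_bound[OF g])
      fix x :: real assume "0 < x" "x < 1"
      then have "x powr (1 / P w - 1) \<le> 1" using e by (simp add: powr_le1)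
      then show "\<bar>x powr (1 / P w - 1) * g x\<bar> \<le> \<bar>g x\<bar>"
        by (simp add: abs_mult mult_left_le_one_le)
    qed measurable
  qed
  finally show ?thesis .
qed

text \<open>For \<open>a \<ge> 1\<close>, \<open>a * beta_gap g a\<close> is \<open>E g(Y) - E0 g\<close> for \<open>Y\<close> with the Beta(\<open>a\<close>, 1) density
  \<open>a * x powr (a - 1)\<close>; the density of \<open>mu1 W P\<close> mixes these densities with weights \<open>P w\<close> and
  exponents \<open>a = 1 / P w\<close>.\<close>
definition beta_gap :: "(real \<Rightarrow> real) \<Rightarrow> real \<Rightarrow> real" where
  "beta_gap g a = (LBINT x:{0<..<1}. x powr (a - 1) * g x) - (1 / a) * (LBINT x:{0<..<1}. g x)"

lemma beta_gap_cong:
  assumes "\<And>x. 0 < x \<Longrightarrow> x < 1 \<Longrightarrow> g x = h x"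
  shows "beta_gap g a = beta_gap h a"
proof -
  have "(LBINT x:{0<..<1}. u x * g x) = (LBINT x:{0<..<1}. u x * h x)" for u :: "real \<Rightarrow> real"
    using assms by (intro set_lebesgue_integral_cong) auto
  from this[of "\<lambda>x. x powr (a - 1)"] this[of "\<lambda>_. 1"] show ?thesis
    unfolding beta_gap_def by simp
qed

lemma E1_minus_E0_eq_sum_beta_gap:
  assumes P: "prob_vec W P" and [measurable]: "g \<in> borel_measurable borel"
    and g: "set_integrable lborel {0<..<1} g"
  shows "E1 W P g - E0 g = (\<Sum>w\<in>{w\<in>W. P w > 0}. beta_gap g (1 / P w))"
proof -
  have "E0 g = (\<Sum>w\<in>{w\<in>W. P w > 0}. P w) * (LBINT x:{0<..<1}. g x)"
    using E0_eq_set_integral prob_vec_sum_support_eq_one[OF P] by simp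
  then show ?thesis
    using E1_eq_sum_set_integral[OF _ g prob_vec_le_one[OF P]]
    unfolding beta_gap_def by (simp add: sum_subtractf sum_distrib_right)
qed

lemma beta_gap_by_parts:
  fixes g g' :: "real \<Rightarrow> real"
  assumes a: "1 \<le> a"
    and [measurable]: "g \<in> borel_measurable borel" "g' \<in> borel_measurable borel"
    and deriv: "\<And>x. 0 < x \<Longrightarrow> x < 1 \<Longrightarrow> (g has_real_derivative g' x) (at x)"
    and cont: "\<And>x. 0 < x \<Longrightarrow> x < 1 \<Longrightarrow> isCont g' x"
    and g: "set_integrable lborel {0<..<1} g"
    and bound: "\<And>x. 0 < x \<Longrightarrow> x < 1 \<Longrightarrow> \<bar>g' x * (x - x powr a)\<bar> \<le> B"
    and lim0: "((\<lambda>x. g x * (x powr a - x)) \<longlongrightarrow> 0) (at_right 0)"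
    and lim1: "((\<lambda>x. g x * (x powr a - x)) \<longlongrightarrow> 0) (at_left 1)"
  shows "set_integrable lborel {0<..<1} (\<lambda>x. g' x * (x - x powr a))"
    and "a * beta_gap g a = (LBINT x:{0<..<1}. g' x * (x - x powr a))"
proof -
  show int1: "set_integrable lborel {0<..<1} (\<lambda>x. g' x * (x - x powr a))"
  proof (rule set_integrable_unit_interval_bound[OF set_integrable_unit_interval_const[of B]])
    show "\<bar>g' x * (x - x powr a)\<bar> \<le> \<bar>B\<bar>" if "0 < x" "x < 1" for x
      using bound[OF that] by linarith
  qed measurable
  have int2: "set_integrable lborel {0<..<1} (\<lambda>x. x powr (a - 1) * g x)"
  proof (rule set_integrable_unit_interval_bound[OF g])
    fix x :: real assume "0 < x" "x < 1"
    then have "x powr (a - 1) \<le> 1" using a by (simp add: powr_le1)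
    then show "\<bar>x powr (a - 1) * g x\<bar> \<le> \<bar>g x\<bar>"
      by (simp add: abs_mult mult_left_le_one_le)
  qed measurable
  define f where "f x = a * (x powr (a - 1) * g x) - g x - g' x * (x - x powr a)" for x
  have "(LBINT x:{0<..<1}. f x) = 0 - 0"
  proof (rule set_integral_unit_interval_FTC[OF _ _ _ lim0 lim1])
    fix x :: real assume x: "0 < x" "x < 1"
    show "((\<lambda>x. g x * (x powr a - x)) has_real_derivative f x) (at x)"
      using x deriv[OF x] by (auto intro!: derivative_eq_intros simp: f_def algebra_simps)
    show "isCont f x"
      using x cont[OF x] DERIV_isCont[OF deriv[OF x]] unfolding f_def
      by (auto intro!: continuous_intros)
  next
    show "set_integrable lborel {0<..<1} f"
      unfolding f_def using int1 int2 g by (intro set_integral_diff set_integrable_mult_right)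
  qed
  then show "a * beta_gap g a = (LBINT x:{0<..<1}. g' x * (x - x powr a))"
    using int1 int2 g a
    by (simp add: f_def beta_gap_def set_integral_diff set_integrable_mult_right right_diff_distrib)
qed

lemma set_integral_unit_interval_one_minus_powr:
  fixes a :: real
  assumes "1 \<le> a"
  shows "set_integrable lborel {0<..<1} (\<lambda>x. 1 - x powr (a - 1))"
    and "(LBINT x:{0<..<1}. 1 - x powr (a - 1)) = 1 - 1 / a"
proof -
  note powr = set_integral_unit_interval_powr[of "a - 1"]
  show "set_integrable lborel {0<..<1} (\<lambda>x. 1 - x powr (a - 1))"
    using powr assms set_integrable_unit_interval_const by (intro set_integral_diff) auto
  have "(LBINT x:{0<..<1::real}. (1::real)) = 1"
    by (subst set_integral_const) auto
  then show "(LBINT x:{0<..<1}. 1 - x powr (a - 1)) = 1 - 1 / a"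
    using powr assms set_integrable_unit_interval_const[of 1] by (simp add: set_integral_diff)
qed

text \<open>Bounds on \<open>x g'(x)\<close> pass to the gap because \<open>x - x powr a = x * (1 - x powr (a - 1))\<close>, where
  the weight \<open>1 - x powr (a - 1)\<close> is nonnegative and integrates to \<open>1 - 1 / a\<close>.\<close>
lemma beta_gap_bounds_by_parts:
  fixes g g' :: "real \<Rightarrow> real"
  assumes a: "1 \<le> a"
    and gm [measurable]: "g \<in> borel_measurable borel"
    and g'm [measurable]: "g' \<in> borel_measurable borel"
    and deriv: "\<And>x. 0 < x \<Longrightarrow> x < 1 \<Longrightarrow> (g has_real_derivative g' x) (at x)"
    and cont: "\<And>x. 0 < x \<Longrightarrow> x < 1 \<Longrightarrow> isCont g' x"
    and g: "set_integrable lborel {0<..<1} g"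
    and bounds: "\<And>x. 0 < x \<Longrightarrow> x < 1 \<Longrightarrow> lo \<le> x * g' x \<and> x * g' x \<le> hi"
    and lim0: "((\<lambda>x. g x * (x powr a - x)) \<longlongrightarrow> 0) (at_right 0)"
    and lim1: "((\<lambda>x. g x * (x powr a - x)) \<longlongrightarrow> 0) (at_left 1)"
  shows "lo * (1 - 1 / a) / a \<le> beta_gap g a" and "beta_gap g a \<le> hi * (1 - 1 / a) / a"
proof -
  have factor: "g' x * (x - x powr a) = x * g' x * (1 - x powr (a - 1))"
    and weight: "0 \<le> 1 - x powr (a - 1)" "1 - x powr (a - 1) \<le> 1" if "0 < x" "x < 1" for x
    using that a by (auto simp: powr_mult_base algebra_simps powr_le1)
  have bound: "\<bar>g' x * (x - x powr a)\<bar> \<le> \<bar>lo\<bar> + \<bar>hi\<bar>" if "0 < x" "x < 1" for x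
  proof -
    have "\<bar>x * g' x * (1 - x powr (a - 1))\<bar> \<le> \<bar>x * g' x\<bar> * 1"
      unfolding abs_mult using weight[OF that] by (intro mult_left_mono) auto
    then show ?thesis using bounds[OF that] factor[OF that] by linarith
  qed
  have pointwise: "lo * (1 - x powr (a - 1)) \<le> g' x * (x - x powr a)"
      "g' x * (x - x powr a) \<le> hi * (1 - x powr (a - 1))" if "0 < x" "x < 1" for x
    unfolding factor[OF that] using bounds[OF that] weight[OF that] by (auto intro: mult_right_mono)
  note parts = beta_gap_by_parts[OF a gm g'm deriv cont g bound lim0 lim1]
  note weight_int = set_integral_unit_interval_one_minus_powr[OF a]
  have "lo * (1 - 1 / a) = (LBINT x:{0<..<1}. lo * (1 - x powr (a - 1)))"
    using weight_int(2) by simp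
  also have "\<dots> \<le> (LBINT x:{0<..<1}. g' x * (x - x powr a))"
    using pointwise by (intro set_integral_mono parts(1) set_integrable_mult_right weight_int(1)) auto
  finally have "lo * (1 - 1 / a) \<le> a * beta_gap g a"
    using parts(2) by simp
  have "a * beta_gap g a = (LBINT x:{0<..<1}. g' x * (x - x powr a))"
    using parts(2) .
  also have "\<dots> \<le> (LBINT x:{0<..<1}. hi * (1 - x powr (a - 1)))"
    using pointwise by (intro set_integral_mono parts(1) set_integrable_mult_right weight_int(1)) auto
  also have "\<dots> = hi * (1 - 1 / a)"
    using weight_int(2) by simp
  finally have "a * beta_gap g a \<le> hi * (1 - 1 / a)" .
  with \<open>lo * (1 - 1 / a) \<le> a * beta_gap g a\<close>
  show "lo * (1 - 1 / a) / a \<le> beta_gap g a" "beta_gap g a \<le> hi * (1 - 1 / a) / a"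
    using a by (auto simp: field_simps)
qed

section \<open>Logarithmic scores\<close>

lemma ln_dominated_unit_interval:
  fixes g :: "real \<Rightarrow> real"
  assumes [measurable]: "g \<in> borel_measurable borel"
    and bound: "\<And>x. 0 < x \<Longrightarrow> x < 1 \<Longrightarrow> \<bar>g x\<bar> \<le> B - A * ln x"
    and a: "1 \<le> a"
  shows "set_integrable lborel {0<..<1} g"
    and "((\<lambda>x. g x * (x powr a - x)) \<longlongrightarrow> 0) (at_right 0)"
proof -
  have "set_integrable lborel {0<..<1} (\<lambda>x. B - A * ln x)"
    by (intro set_integral_diff set_integrable_mult_right set_integrable_unit_interval_const
        set_integrable_unit_interval_ln)
  then show "set_integrable lborel {0<..<1} g"
  proof (rule set_integrable_unit_interval_bound)
    show "\<bar>g x\<bar> \<le> \<bar>B - A * ln x\<bar>" if "0 < x" "x < 1" for x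
      using bound[OF that] by linarith
  qed measurable
  show "((\<lambda>x. g x * (x powr a - x)) \<longlongrightarrow> 0) (at_right 0)"
  proof (rule Lim_null_comparison)
    show "\<forall>\<^sub>F x in at_right 0. norm (g x * (x powr a - x)) \<le> (B - A * ln x) * x"
    proof (rule eventually_at_rightI[of 0 1])
      fix x :: real assume "x \<in> {0<..<1}"
      then have x: "0 < x" "x < 1" by auto
      have "x powr a \<le> x powr 1" using x a by (intro powr_mono') auto
      then have "\<bar>x powr a - x\<bar> \<le> x" using x by simp
      then show "norm (g x * (x powr a - x)) \<le> (B - A * ln x) * x"
        unfolding real_norm_def abs_mult using bound[OF x] by (intro mult_mono) auto
    qed simp
    show "((\<lambda>x. (B - A * ln x) * x) \<longlongrightarrow> 0) (at_right 0)"
      by real_asymp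
  qed
qed

lemma abs_ln_sum_powr_le:
  fixes e :: "'i \<Rightarrow> real"
  assumes T: "finite T" "T \<noteq> {}" and e: "\<And>i. i \<in> T \<Longrightarrow> 0 \<le> e i \<and> e i \<le> hi"
    and x: "0 < x" "x < 1"
  shows "\<bar>ln (\<Sum>i\<in>T. x powr e i)\<bar> \<le> ln (card T) - hi * ln x"
proof -
  obtain i0 where i0: "i0 \<in> T" using T by auto
  have pos: "0 < (\<Sum>i\<in>T. x powr e i)"
    using T x by (intro sum_pos) auto
  have "x powr hi \<le> x powr e i0"
    using x e[OF i0] by (intro powr_mono') auto
  also have "\<dots> \<le> (\<Sum>i\<in>T. x powr e i)"
    using T i0 by (intro member_le_sum) auto
  finally have "ln (x powr hi) \<le> ln (\<Sum>i\<in>T. x powr e i)"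
    using x by (intro ln_mono) auto
  then have lower: "hi * ln x \<le> ln (\<Sum>i\<in>T. x powr e i)"
    by simp
  have "(\<Sum>i\<in>T. x powr e i) \<le> (\<Sum>i\<in>T. 1)"
    using x e by (intro sum_mono powr_le1) auto
  then have upper: "ln (\<Sum>i\<in>T. x powr e i) \<le> ln (card T)"
    using pos by simp
  have "0 \<le> ln (card T)" "0 \<le> - hi * ln x"
    using T x e[OF i0] by (auto simp: Suc_le_eq card_gt_0_iff mult_nonneg_nonpos)
  with lower upper show ?thesis
    unfolding abs_le_iff by linarith
qed

text \<open>\<open>q\<close> is the average of the exponents \<open>e i\<close> with weights \<open>x powr e i\<close>.\<close>
lemma x_mult_deriv_ln_sum_powr_bounds:
  fixes e :: "'i \<Rightarrow> real"
  assumes T: "finite T" "T \<noteq> {}" and e: "\<And>i. i \<in> T \<Longrightarrow> lo \<le> e i \<and> e i \<le> hi"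
    and x: "0 < x"
  defines "q \<equiv> x * ((\<Sum>i\<in>T. e i * x powr (e i - 1)) / (\<Sum>i\<in>T. x powr e i))"
  shows "lo \<le> q" and "q \<le> hi"
proof -
  have pos: "0 < (\<Sum>i\<in>T. x powr e i)"
    using T x by (intro sum_pos) auto
  have "x * (\<Sum>i\<in>T. e i * x powr (e i - 1)) = (\<Sum>i\<in>T. e i * x powr e i)"
    unfolding sum_distrib_left using x by (intro sum.cong) (auto simp: powr_mult_base)
  moreover have "lo * (\<Sum>i\<in>T. x powr e i) \<le> (\<Sum>i\<in>T. e i * x powr e i)"
    "(\<Sum>i\<in>T. e i * x powr e i) \<le> hi * (\<Sum>i\<in>T. x powr e i)"
    unfolding sum_distrib_left using e by (auto intro!: sum_mono mult_right_mono)
  ultimately show "lo \<le> q" "q \<le> hi"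
    unfolding q_def using pos by (simp_all add: field_simps)
qed

lemma beta_gap_ln_sum_powr:
  fixes e :: "'i \<Rightarrow> real"
  assumes T: "finite T" "T \<noteq> {}" and e: "\<And>i. i \<in> T \<Longrightarrow> lo \<le> e i \<and> e i \<le> hi"
    and lo: "0 \<le> lo" and a: "1 \<le> a"
  defines "G \<equiv> \<lambda>x. ln (\<Sum>i\<in>T. x powr e i)"
  shows "set_integrable lborel {0<..<1} G"
    and "lo * (1 - 1 / a) / a \<le> beta_gap G a" and "beta_gap G a \<le> hi * (1 - 1 / a) / a"
proof -
  define S where "S x = (\<Sum>i\<in>T. x powr e i)" for x :: real
  define S' where "S' x = (\<Sum>i\<in>T. e i * x powr (e i - 1))" for x :: real
  have G: "G = (\<lambda>x. ln (S x))" unfolding G_def S_def ..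
  have S_pos: "0 < S x" if "0 < x" for x
    unfolding S_def using T that by (intro sum_pos) auto
  have S_deriv: "(S has_real_derivative S' x) (at x)" if "0 < x" for x
    unfolding S_def S'_def using that by (auto intro!: derivative_eq_intros)
  have G_deriv: "(G has_real_derivative S' x / S x) (at x)" if "0 < x" for x
    unfolding G using S_deriv[OF that] S_pos[OF that]
    by (auto intro!: derivative_eq_intros simp: field_simps)
  have cont: "isCont (\<lambda>x. S' x / S x) x" if "0 < x" for x
    unfolding S'_def using that DERIV_isCont[OF S_deriv[OF that]] S_pos[OF that]
    by (auto intro!: continuous_intros)
  have average: "lo \<le> x * (S' x / S x) \<and> x * (S' x / S x) \<le> hi" if "0 < x" for x
    using x_mult_deriv_ln_sum_powr_bounds[of T lo e hi, OF T e that] unfolding S_def S'_def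
    by simp
  have bound: "\<bar>G x\<bar> \<le> ln (card T) - hi * ln x" if "0 < x" "x < 1" for x
    using abs_ln_sum_powr_le[of T e hi, OF T _ that] e lo unfolding G_def by force
  have G_meas [measurable]: "G \<in> borel_measurable borel" unfolding G_def by measurable
  note dom = ln_dominated_unit_interval[OF G_meas bound a]
  show "set_integrable lborel {0<..<1} G" by (rule dom(1))
  have "isCont (\<lambda>x. G x * (x powr a - x)) 1"
    unfolding G using DERIV_isCont[OF S_deriv] S_pos[of 1] by (auto intro!: continuous_intros)
  then have lim1: "((\<lambda>x. G x * (x powr a - x)) \<longlongrightarrow> 0) (at_left 1)"
    by (simp add: isCont_def filterlim_at_split)
  have "(\<lambda>x. S' x / S x) \<in> borel_measurable borel"
    unfolding S_def S'_def by measurable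
  from beta_gap_bounds_by_parts[OF a G_meas this G_deriv cont dom(1) average dom(2) lim1]
  show "lo * (1 - 1 / a) / a \<le> beta_gap G a" "beta_gap G a \<le> hi * (1 - 1 / a) / a"
    by auto
qed

lemma h_log_borel_measurable [measurable]: "h_log \<in> borel_measurable borel"
  unfolding h_log_def by measurable

lemma set_integrable_h_log: "set_integrable lborel {0<..<1} h_log"
  using set_integrable_unit_interval_ln unfolding h_log_def[abs_def] .

lemma beta_gap_h_log:
  assumes "1 \<le> a"
  shows "beta_gap h_log a = (1 - 1 / a) / a"
proof -
  have "beta_gap h_log a = beta_gap (\<lambda>x. ln (\<Sum>i\<in>{()}. x powr 1)) a"
    by (rule beta_gap_cong) (simp add: h_log_def)
  with beta_gap_ln_sum_powr(2,3)[of "{()}" 1 "\<lambda>_. 1" 1 a] assms show ?thesis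
    by simp
qed

lemma beta_gap_ln_f1:
  assumes V: "finite V" "\<exists>v\<in>V. 0 < Q v" and Q: "\<And>v. v \<in> V \<Longrightarrow> Q v < 1"
  obtains lo hi where "0 < lo" "0 < hi"
    "set_integrable lborel {0<..<1} (\<lambda>x. ln (f1 V Q x))"
    "\<And>a. 1 \<le> a \<Longrightarrow> lo * (1 - 1 / a) / a \<le> beta_gap (\<lambda>x. ln (f1 V Q x)) a"
    "\<And>a. 1 \<le> a \<Longrightarrow> beta_gap (\<lambda>x. ln (f1 V Q x)) a \<le> hi * (1 - 1 / a) / a"
proof -
  define T where "T = {v\<in>V. Q v > 0}"
  define e where "e v = 1 / Q v - 1" for v
  have T: "finite T" "T \<noteq> {}" using V unfolding T_def by auto
  have e_pos: "0 < e v" if "v \<in> T" for v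
    using that Q unfolding T_def e_def by (auto simp: field_simps)
  define lo where "lo = Min (e ` T)"
  define hi where "hi = Max (e ` T)"
  have e: "lo \<le> e v \<and> e v \<le> hi" if "v \<in> T" for v
    using T that unfolding lo_def hi_def by auto
  have lo: "0 < lo"
    using T e_pos Min_in[of "e ` T"] unfolding lo_def by auto
  obtain v0 where "v0 \<in> T" using T by auto
  then have hi: "0 < hi" using e lo by force
  have f1: "(\<lambda>x. ln (f1 V Q x)) = (\<lambda>x. ln (\<Sum>v\<in>T. x powr e v))"
    unfolding f1_def T_def e_def ..
  show ?thesis
    using beta_gap_ln_sum_powr[where e=e and lo=lo and hi=hi, OF T e less_imp_le[OF lo]]
    unfolding f1[symmetric]
    by (intro that[OF lo hi]) auto
qed

lemma Pstar_pos_lt_one: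
  fixes D0 :: real
  assumes "0 < D0" "D0 < 1"
  shows "0 < Pstar D0 0" and "Pstar D0 i < 1"
proof -
  define k where "k = nat \<lfloor>1 / (1 - D0)\<rfloor>"
  have "1 \<le> 1 / (1 - D0)" using assms by simp
  then have k: "1 \<le> k" unfolding k_def by linarith
  have P: "Pstar D0 i = (if i < k then 1 - D0 else if i = k then 1 - (1 - D0) * real k else 0)" for i
    unfolding Pstar_def k_def Let_def ..
  have "(1 - D0) * 1 \<le> (1 - D0) * real k" using assms k by (intro mult_left_mono) auto
  then show "0 < Pstar D0 0" "Pstar D0 i < 1"
    using assms k unfolding P by auto
qed

lemma h_opt_borel_measurable [measurable]: "h_opt D0 \<in> borel_measurable borel"
  unfolding h_opt_def by measurable

lemma beta_gap_h_opt:
  fixes D0 :: real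
  assumes "0 < D0" "D0 < 1"
  obtains lo hi where "0 < lo" "0 < hi" "set_integrable lborel {0<..<1} (h_opt D0)"
    "\<And>a. 1 \<le> a \<Longrightarrow> lo * (1 - 1 / a) / a \<le> beta_gap (h_opt D0) a"
    "\<And>a. 1 \<le> a \<Longrightarrow> beta_gap (h_opt D0) a \<le> hi * (1 - 1 / a) / a"
  using Pstar_pos_lt_one[OF assms]
  by (rule_tac beta_gap_ln_f1[of "{0..nat \<lfloor>1 / (1 - D0)\<rfloor>}" "Pstar D0"])
    (auto simp: h_opt_def[abs_def] intro: that)

section \<open>The scores \<open>h_ind\<close> and \<open>h_ars\<close>\<close>

lemma h_ind_borel_measurable [measurable]: "h_ind d \<in> borel_measurable borel"
  unfolding h_ind_def by measurable

lemma set_integrable_h_ind: "set_integrable lborel {0<..<1} (h_ind d)"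
  by (rule set_integrable_unit_interval_bound[OF set_integrable_unit_interval_const[of 1]])
    (auto simp: h_ind_def)

lemma beta_gap_h_ind:
  fixes a d :: real
  assumes a: "0 < a" and d: "0 < d" "d < 1"
  shows "beta_gap (h_ind d) a = (d - d powr a) / a"
proof -
  have powr_h_ind: "(LBINT x:{0<..<1}. x powr (b - 1) * h_ind d x) = (1 - d powr b) / b"
    if "0 < b" for b :: real
  proof -
    have "(LBINT x:{0<..<1}. x powr (b - 1) * h_ind d x) = (LBINT x:{d..<1}. x powr (b - 1))"
      unfolding set_lebesgue_integral_def using d
      by (intro Bochner_Integration.integral_cong) (auto simp: h_ind_def indicator_def)
    also have "\<dots> = (LBINT x:{d<..<1}. x powr (b - 1))"
      by (rule set_integral_discrete_difference[where X="{d}"]) auto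
    also have "\<dots> = 1 powr b / b - d powr b / b"
      using d that
      by (intro set_integral_Ioo_FTC continuous_intros) (auto intro!: derivative_eq_intros)
    finally show ?thesis by (simp add: diff_divide_distrib)
  qed
  have "(LBINT x:{0<..<1}. h_ind d x) = (LBINT x:{0<..<1}. x powr (1 - 1) * h_ind d x)"
    by (rule set_lebesgue_integral_cong) auto
  with powr_h_ind[of 1] powr_h_ind[OF a] a d show ?thesis
    unfolding beta_gap_def by (simp add: field_simps)
qed

lemma h_ars_borel_measurable [measurable]: "h_ars \<in> borel_measurable borel"
  unfolding h_ars_def by measurable

lemma set_integrable_h_ars: "set_integrable lborel {0<..<1} h_ars"
  unfolding h_ars_def
proof (rule set_integrable_unit_interval_FTC_nonneg[where F="\<lambda>x. (1 - x) * ln (1 - x) - (1 - x)"])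
  fix x :: real assume x: "0 < x" "x < 1"
  show "((\<lambda>x. (1 - x) * ln (1 - x) - (1 - x)) has_real_derivative - ln (1 - x)) (at x)"
    using x by (auto intro!: derivative_eq_intros)
  show "isCont (\<lambda>x. - ln (1 - x)) x" "0 \<le> - ln (1 - x)"
    using x by (auto intro!: continuous_intros)
qed real_asymp+

lemma diff_powr_add_one_bounds:
  fixes x m :: real
  assumes x: "0 < x" "x < 1" and m: "0 \<le> m"
  shows "0 \<le> x - x powr (m + 1)" and "x - x powr (m + 1) \<le> m * (1 - x)"
proof -
  have p: "x powr (m + 1) = x * x powr m" using x by (simp add: powr_add)
  have "x powr m \<le> 1" using x m by (simp add: powr_le1)
  then show "0 \<le> x - x powr (m + 1)" using x by (simp add: p mult_left_le)
  have "1 + m * ln x \<le> x powr m"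
    using exp_ge_add_one_self[of "m * ln x"] x by (simp add: powr_def)
  moreover have "m * - ln x \<le> m * (1 / x - 1)"
    using ln_le_minus_one[of "1 / x"] x m by (intro mult_left_mono) (auto simp: ln_div)
  ultimately have "x * (1 - x powr m) \<le> x * (m * (1 / x - 1))"
    using x by (intro mult_left_mono) auto
  also have "\<dots> = m * (1 - x)" using x by (simp add: field_simps)
  finally show "x - x powr (m + 1) \<le> m * (1 - x)"
    unfolding p by (simp add: algebra_simps)
qed

lemma powr_le_inverse_one_plus:
  fixes x m :: real
  assumes x: "0 < x" "x \<le> 1" and m: "0 \<le> m"
  shows "x powr m \<le> 1 / (1 + m * (1 - x))"
proof -
  define t where "t = m * (1 - x)"
  have t: "0 \<le> t" unfolding t_def using x m by simp
  have "m * ln x \<le> m * (x - 1)"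
    using ln_le_minus_one[OF x(1)] m by (rule mult_left_mono)
  then have "x powr m \<le> exp (- t)"
    using x unfolding t_def by (simp add: powr_def algebra_simps)
  also have "exp (- t) = 1 / exp t" by (simp add: exp_minus field_simps)
  also have "\<dots> \<le> 1 / (1 + t)"
    using exp_ge_add_one_self[of t] t by (intro divide_left_mono) auto
  finally show ?thesis unfolding t_def .
qed

text \<open>Envelopes with explicit integrals of order \<open>ln (1 + m)\<close>.\<close>
lemma h_ars_integrand_bounds:
  fixes x m :: real
  assumes x: "0 < x" "x < 1" and m: "0 \<le> m"
  shows "m * x / (1 + m * (1 - x)) \<le> (x - x powr (m + 1)) / (1 - x)"
    and "(x - x powr (m + 1)) / (1 - x) \<le> 2 * m / (1 + m * (1 - x))"
proof -
  define t where "t = m * (1 - x)"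
  have t: "0 \<le> t" unfolding t_def using x m by simp
  have p: "x powr (m + 1) = x * x powr m" using x by (simp add: powr_add)
  have "t / (1 + t) \<le> 1 - x powr m"
    using powr_le_inverse_one_plus[of x m] x m t unfolding t_def[symmetric] by (simp add: field_simps)
  then have "x * (t / (1 + t)) \<le> x * (1 - x powr m)"
    using x by (intro mult_left_mono) auto
  then have "x * (t / (1 + t)) \<le> x - x powr (m + 1)"
    unfolding p by (simp add: algebra_simps)
  moreover have "m * x / (1 + t) * (1 - x) = x * (t / (1 + t))"
    unfolding t_def by (simp add: algebra_simps)
  ultimately have "m * x / (1 + t) * (1 - x) \<le> x - x powr (m + 1)"
    by linarith
  then show "m * x / (1 + m * (1 - x)) \<le> (x - x powr (m + 1)) / (1 - x)"
    unfolding t_def[symmetric] using x by (simp add: pos_le_divide_eq)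
  have below_m: "(x - x powr (m + 1)) / (1 - x) \<le> m"
    using diff_powr_add_one_bounds(2)[OF x m] x by (simp add: field_simps)
  have below_inverse: "(x - x powr (m + 1)) / (1 - x) \<le> 1 / (1 - x)"
    using x powr_ge_zero[of x "m + 1"] by (intro divide_right_mono) linarith+
  show "(x - x powr (m + 1)) / (1 - x) \<le> 2 * m / (1 + m * (1 - x))"
  proof (cases "t \<le> 1")
    case True
    then have "m \<le> 2 * m / (1 + t)" using t m by (simp add: field_simps mult_left_le)
    then show ?thesis using below_m unfolding t_def by linarith
  next
    case False
    then have "1 / (1 - x) \<le> 2 * m / (1 + t)"
      using x unfolding t_def by (simp add: field_simps)
    then show ?thesis using below_inverse unfolding t_def by linarith
  qed
qed

lemma set_integral_h_ars_upper_envelope: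
  fixes m :: real
  assumes m: "0 \<le> m"
  shows "set_integrable lborel {0<..<1} (\<lambda>x. 2 * m / (1 + m * (1 - x)))"
    and "(LBINT x:{0<..<1}. 2 * m / (1 + m * (1 - x))) = 2 * ln (1 + m)"
proof -
  have pos: "0 < 1 + m * (1 - x)" if "x \<le> 1" for x
    using m that by (simp add: add_pos_nonneg)
  have cont: "continuous_on {0..1} (\<lambda>x. 2 * m / (1 + m * (1 - x)))"
    using pos by (intro continuous_intros) (auto simp: less_imp_neq[symmetric])
  then show "set_integrable lborel {0<..<1} (\<lambda>x. 2 * m / (1 + m * (1 - x)))"
    by (rule set_integrable_unit_interval_continuous_on)
  have "(LBINT x:{0<..<1}. 2 * m / (1 + m * (1 - x)))
      = - 2 * ln (1 + m * (1 - 1)) - - 2 * ln (1 + m * (1 - 0))"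
    using pos cont
    by (intro set_integral_Ioo_FTC) (auto intro!: derivative_eq_intros simp: field_simps)
  then show "(LBINT x:{0<..<1}. 2 * m / (1 + m * (1 - x))) = 2 * ln (1 + m)"
    by simp
qed

lemma set_integral_h_ars_lower_envelope:
  fixes m :: real
  assumes m: "0 < m"
  shows "set_integrable lborel {0<..<1} (\<lambda>x. m * x / (1 + m * (1 - x)))"
    and "(LBINT x:{0<..<1}. m * x / (1 + m * (1 - x))) = (1 + m) / m * ln (1 + m) - 1"
proof -
  have pos: "0 < 1 + m * (1 - x)" if "x \<le> 1" for x
    using m that by (simp add: add_pos_nonneg)
  have cont: "continuous_on {0..1} (\<lambda>x. m * x / (1 + m * (1 - x)))"
    using pos by (intro continuous_intros) (auto simp: less_imp_neq[symmetric])
  then show "set_integrable lborel {0<..<1} (\<lambda>x. m * x / (1 + m * (1 - x)))"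
    by (rule set_integrable_unit_interval_continuous_on)
  define F where "F x = - x - (1 + m) / m * ln (1 + m * (1 - x))" for x
  have "(F has_real_derivative m * x / (1 + m * (1 - x))) (at x)" if "x \<le> 1" for x
  proof -
    have "(F has_real_derivative - 1 + (1 + m) / (1 + m * (1 - x))) (at x)"
      unfolding F_def using pos[OF that] m by (auto intro!: derivative_eq_intros)
    moreover have "- 1 + (1 + m) / (1 + m * (1 - x)) = m * x / (1 + m * (1 - x))"
      using pos[OF that] by (simp add: field_simps)
    ultimately show ?thesis by simp
  qed
  then have "(LBINT x:{0<..<1}. m * x / (1 + m * (1 - x))) = F 1 - F 0"
    using cont by (intro set_integral_Ioo_FTC) auto
  then show "(LBINT x:{0<..<1}. m * x / (1 + m * (1 - x))) = (1 + m) / m * ln (1 + m) - 1"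
    by (simp add: F_def)
qed

lemma h_ars_mult_powr_diff_tendsto:
  fixes a :: real
  assumes a: "1 \<le> a"
  shows "((\<lambda>x. h_ars x * (x powr a - x)) \<longlongrightarrow> 0) (at_right 0)"
    and "((\<lambda>x. h_ars x * (x powr a - x)) \<longlongrightarrow> 0) (at_left 1)"
proof -
  define m where "m = a - 1"
  have m: "0 \<le> m" and am: "a = m + 1" using a unfolding m_def by auto
  show "((\<lambda>x. h_ars x * (x powr a - x)) \<longlongrightarrow> 0) (at_right 0)"
  proof -
    have "(h_ars \<longlongrightarrow> 0) (at_right 0)" unfolding h_ars_def by real_asymp
    moreover have "((\<lambda>x::real. x powr a) \<longlongrightarrow> 0) (at_right 0)"
      using a by (intro tendsto_zero_powrI) (auto intro!: tendsto_intros eventually_at_rightI[of 0 1])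
    ultimately have "((\<lambda>x. h_ars x * (x powr a - x)) \<longlongrightarrow> 0 * (0 - 0)) (at_right 0)"
      by (intro tendsto_intros tendsto_ident_at)
    then show ?thesis by simp
  qed
  show "((\<lambda>x. h_ars x * (x powr a - x)) \<longlongrightarrow> 0) (at_left 1)"
  proof (rule Lim_null_comparison)
    show "\<forall>\<^sub>F x in at_left 1. norm (h_ars x * (x powr a - x)) \<le> m * ((1 - x) * - ln (1 - x))"
    proof (rule eventually_at_leftI[of 0])
      fix x :: real assume "x \<in> {0<..<1}"
      then have x: "0 < x" "x < 1" by auto
      have "- ln (1 - x) * (x - x powr a) \<le> - ln (1 - x) * (m * (1 - x))"
        using diff_powr_add_one_bounds[OF x m] x unfolding am by (intro mult_left_mono) auto
      then show "norm (h_ars x * (x powr a - x)) \<le> m * ((1 - x) * - ln (1 - x))"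
        using diff_powr_add_one_bounds[OF x m] x unfolding am h_ars_def
        by (simp add: abs_mult algebra_simps)
    qed simp
    show "((\<lambda>x. m * ((1 - x) * - ln (1 - x))) \<longlongrightarrow> 0) (at_left 1)"
      by real_asymp
  qed
qed

lemma h_ars_by_parts:
  fixes a :: real
  assumes a: "1 \<le> a"
  shows "set_integrable lborel {0<..<1} (\<lambda>x. (x - x powr a) / (1 - x))"
    and "a * beta_gap h_ars a = (LBINT x:{0<..<1}. (x - x powr a) / (1 - x))"
proof -
  define m where "m = a - 1"
  have m: "0 \<le> m" and am: "a = m + 1" using a unfolding m_def by auto
  have deriv: "(h_ars has_real_derivative 1 / (1 - x)) (at x)" if "0 < x" "x < 1" for x
    unfolding h_ars_def using that by (auto intro!: derivative_eq_intros simp: field_simps)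
  have cont: "isCont (\<lambda>x. 1 / (1 - x)) x" if "0 < x" "x < 1" for x :: real
    using that by (auto intro!: continuous_intros)
  have meas: "(\<lambda>x::real. 1 / (1 - x)) \<in> borel_measurable borel" by measurable
  have bound: "\<bar>1 / (1 - x) * (x - x powr a)\<bar> \<le> m" if x: "0 < x" "x < 1" for x
    using diff_powr_add_one_bounds[OF x m] x unfolding am by (simp add: field_simps)
  note parts = beta_gap_by_parts[OF a h_ars_borel_measurable meas deriv cont set_integrable_h_ars
      bound h_ars_mult_powr_diff_tendsto[OF a]]
  show "set_integrable lborel {0<..<1} (\<lambda>x. (x - x powr a) / (1 - x))"
    using parts(1) by simp
  show "a * beta_gap h_ars a = (LBINT x:{0<..<1}. (x - x powr a) / (1 - x))"
    using parts(2) by simp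
qed

lemma beta_gap_h_ars_bounds:
  fixes a :: real
  assumes a: "1 \<le> a"
  shows "0 \<le> beta_gap h_ars a" and "a * beta_gap h_ars a \<le> 2 * ln a"
    and "ln a - 1 \<le> a * beta_gap h_ars a"
proof -
  define m where "m = a - 1"
  have m: "0 \<le> m" and am: "a = m + 1" using a unfolding m_def by auto
  note parts = h_ars_by_parts[OF a]
  note integrand = h_ars_integrand_bounds[OF _ _ m, folded am]
  have "0 \<le> a * beta_gap h_ars a"
    unfolding parts(2) set_lebesgue_integral_def
    using diff_powr_add_one_bounds(1)[OF _ _ m, folded am]
    by (intro integral_nonneg_AE AE_I2) (auto simp: indicator_def)
  then show "0 \<le> beta_gap h_ars a"
    using a by (simp add: zero_le_mult_iff)
  have "a * beta_gap h_ars a \<le> (LBINT x:{0<..<1}. 2 * m / (1 + m * (1 - x)))"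
    unfolding parts(2) using integrand(2)
    by (intro set_integral_mono parts(1) set_integral_h_ars_upper_envelope(1)[OF m]) auto
  then show "a * beta_gap h_ars a \<le> 2 * ln a"
    unfolding set_integral_h_ars_upper_envelope(2)[OF m] am by (simp add: add.commute)
  show "ln a - 1 \<le> a * beta_gap h_ars a"
  proof (cases "m = 0")
    case True
    then show ?thesis using \<open>0 \<le> a * beta_gap h_ars a\<close> am by simp
  next
    case False
    then have m_pos: "0 < m" using m by simp
    have "1 * ln (1 + m) \<le> (1 + m) / m * ln (1 + m)"
      using m_pos by (intro mult_right_mono) (auto simp: field_simps)
    then have "ln (1 + m) \<le> (1 + m) / m * ln (1 + m)"
      by simp
    also have "\<dots> - 1 \<le> a * beta_gap h_ars a"
      unfolding parts(2) set_integral_h_ars_lower_envelope(2)[OF m_pos, symmetric] using integrand(1)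
      by (intro set_integral_mono parts(1) set_integral_h_ars_lower_envelope(1)[OF m_pos]) auto
    finally show ?thesis
      unfolding am by (simp add: add.commute)
  qed
qed

lemma beta_gap_h_ars_inverse_bounds:
  fixes p :: real
  assumes "0 < p" "p \<le> 1"
  shows "0 \<le> beta_gap h_ars (1 / p)" and "beta_gap h_ars (1 / p) \<le> 2 * (p * ln (1 / p))"
    and "p * ln (1 / p) - p \<le> beta_gap h_ars (1 / p)"
proof -
  have a: "1 \<le> 1 / p" using assms by simp
  note bounds = beta_gap_h_ars_bounds[OF a]
  show "0 \<le> beta_gap h_ars (1 / p)" by (rule bounds(1))
  have "p * (1 / p * beta_gap h_ars (1 / p)) \<le> p * (2 * ln (1 / p))"
    using bounds(2) assms by (intro mult_left_mono) auto
  then show "beta_gap h_ars (1 / p) \<le> 2 * (p * ln (1 / p))"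
    using assms by simp
  have "p * (ln (1 / p) - 1) \<le> p * (1 / p * beta_gap h_ars (1 / p))"
    using bounds(3) assms by (intro mult_left_mono) auto
  then show "p * ln (1 / p) - p \<le> beta_gap h_ars (1 / p)"
    using assms by (simp add: algebra_simps)
qed

section \<open>Probability vectors and their mode\<close>

locale prob_vec_mode =
  fixes W :: "nat set" and P :: "nat \<Rightarrow> real" and w0 :: nat
  assumes prob_vec: "prob_vec W P"
    and mode_mem: "w0 \<in> W" and mode_eq: "P w0 = 1 - Delta W P"
begin

lemma finite_W: "finite W"
  using prob_vec unfolding prob_vec_def by simp

lemma le_mode: "w \<in> W \<Longrightarrow> P w \<le> P w0"
  using prob_vec mode_eq unfolding prob_vec_def Delta_def by simp

lemma mode_pos: "0 < P w0"
proof -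
  have "1 = (\<Sum>w\<in>W. P w)" using prob_vec unfolding prob_vec_def by simp
  also have "\<dots> \<le> (\<Sum>w\<in>W. P w0)" using le_mode by (intro sum_mono) auto
  finally have "1 \<le> real (card W) * P w0" by simp
  then show ?thesis by (smt (verit) mult_nonneg_nonpos of_nat_0_le_iff)
qed

lemma Delta_nonneg: "0 \<le> Delta W P"
  using prob_vec_le_one[OF prob_vec mode_mem] mode_eq by simp

lemma le_Delta:
  assumes "w \<in> W" "w \<noteq> w0"
  shows "P w \<le> Delta W P"
proof -
  have "P w + P w0 = (\<Sum>v\<in>{w, w0}. P v)" using assms by simp
  also have "\<dots> \<le> (\<Sum>v\<in>W. P v)"
    using prob_vec assms mode_mem unfolding prob_vec_def by (intro sum_mono2) auto
  finally show ?thesis using prob_vec mode_eq unfolding prob_vec_def by simp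
qed

definition rest :: "nat set" where
  "rest = {w\<in>W. P w > 0} - {w0}"

lemma finite_rest: "finite rest"
  using finite_W unfolding rest_def by simp

lemma card_rest_le: "card rest \<le> card W"
  using finite_W unfolding rest_def by (intro card_mono) auto

lemma rest_bounds: "w \<in> rest \<Longrightarrow> 0 < P w \<and> P w \<le> Delta W P"
  using le_Delta unfolding rest_def by auto

lemma sum_support_split: "(\<Sum>w\<in>{w\<in>W. P w > 0}. f w) = f w0 + (\<Sum>w\<in>rest. f w)"
  unfolding rest_def using finite_W mode_mem mode_pos by (intro sum.remove) auto

lemma sum_rest: "(\<Sum>w\<in>rest. P w) = Delta W P"
  using sum_support_split[of P] prob_vec_sum_support_eq_one[OF prob_vec] mode_eq by simp

end

lemma prob_vec_mode_exists:
  assumes "prob_vec W P"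
  shows "\<exists>w0. prob_vec_mode W P w0"
proof -
  have "Max (P ` W) \<in> P ` W"
    using assms unfolding prob_vec_def by simp
  then obtain w0 where "w0 \<in> W" "P w0 = 1 - Delta W P"
    unfolding Delta_def by auto
  with assms show ?thesis
    by (blast intro: prob_vec_mode.intro)
qed

lemma sum_support_mult_one_minus:
  assumes "prob_vec W P"
  shows "(\<Sum>w\<in>{w\<in>W. P w > 0}. P w * (1 - P w)) = 1 - (\<Sum>w\<in>W. (P w)\<^sup>2)"
proof -
  have "(\<Sum>w\<in>{w\<in>W. P w > 0}. (P w)\<^sup>2) = (\<Sum>w\<in>W. (P w)\<^sup>2)"
    by (rule prob_vec_sum_support[OF assms]) simp
  then show ?thesis
    using prob_vec_sum_support_eq_one[OF assms]
    by (simp add: right_diff_distrib power2_eq_square sum_subtractf)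
qed

lemma sum_mult_ln_inverse_le:
  fixes p :: "'a \<Rightarrow> real"
  assumes A: "finite A" and p: "\<And>i. i \<in> A \<Longrightarrow> 0 < p i" and n: "card A \<le> n"
  shows "(\<Sum>i\<in>A. p i * ln (1 / p i)) \<le> (\<Sum>i\<in>A. p i) * ln (n / (\<Sum>i\<in>A. p i))"
proof (cases "A = {}")
  case True
  then show ?thesis by simp
next
  case False
  define s where "s = (\<Sum>i\<in>A. p i)"
  have s: "0 < s" unfolding s_def using A False p by (intro sum_pos) auto
  have card_pos: "0 < card A" using A False by (simp add: card_gt_0_iff)
  then have n_pos: "0 < real n" using n by simp
  have summand: "p i * ln (1 / p i) \<le> s / n - p i + p i * ln (n / s)" if "i \<in> A" for i
  proof -
    have p_pos: "0 < p i" using p that .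
    have "ln (s / (n * p i)) \<le> s / (n * p i) - 1"
      using s n_pos p_pos by (intro ln_le_minus_one) simp
    moreover have "ln (1 / p i) = ln (s / (n * p i)) + ln (n / s)"
      using s n_pos p_pos by (simp add: ln_div ln_mult)
    ultimately have "p i * ln (1 / p i) \<le> p i * (s / (n * p i) - 1 + ln (n / s))"
      using p_pos by (intro mult_left_mono) auto
    also have "\<dots> = s / n - p i + p i * ln (n / s)"
      using p_pos n_pos by (simp add: field_simps)
    finally show ?thesis .
  qed
  have "(\<Sum>i\<in>A. p i * ln (1 / p i)) \<le> (\<Sum>i\<in>A. s / n - p i + p i * ln (n / s))"
    using summand by (rule sum_mono)
  also have "\<dots> = card A * (s / n) - s + s * ln (n / s)"
    by (simp add: sum.distrib sum_subtractf sum_distrib_right[symmetric] s_def)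
  finally show ?thesis
    using mult_right_mono[of "real (card A)" n "s / n"] n n_pos s unfolding s_def[symmetric] by simp
qed

lemma Ent_eq_sum_support:
  assumes "prob_vec W P"
  shows "Ent W P = (\<Sum>w\<in>{w\<in>W. P w > 0}. P w * ln (1 / P w))"
proof -
  have "Ent W P = (\<Sum>w\<in>{w\<in>W. P w > 0}. - (P w * ln (P w)))"
    unfolding Ent_def sum_negf[symmetric] by (rule prob_vec_sum_support[OF assms, symmetric]) simp
  also have "\<dots> = (\<Sum>w\<in>{w\<in>W. P w > 0}. P w * ln (1 / P w))"
    by (intro sum.cong) (auto simp: ln_div)
  finally show ?thesis .
qed

lemma Delta_le_one_minus_sum_squares:
  assumes P: "prob_vec W P"
  shows "Delta W P \<le> 1 - (\<Sum>w\<in>W. (P w)\<^sup>2)"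
proof -
  obtain w0 where "prob_vec_mode W P w0"
    using prob_vec_mode_exists[OF P] ..
  then interpret prob_vec_mode W P w0 .
  have "(\<Sum>w\<in>W. (P w)\<^sup>2) \<le> (\<Sum>w\<in>W. P w0 * P w)"
    using P le_mode unfolding prob_vec_def power2_eq_square by (intro sum_mono mult_right_mono) auto
  also have "\<dots> = P w0"
    using P unfolding prob_vec_def by (simp add: sum_distrib_left[symmetric])
  finally show ?thesis using mode_eq by simp
qed

lemma one_minus_sum_squares_le_two_Delta:
  assumes P: "prob_vec W P"
  shows "1 - (\<Sum>w\<in>W. (P w)\<^sup>2) \<le> 2 * Delta W P"
proof -
  obtain w0 where "prob_vec_mode W P w0"
    using prob_vec_mode_exists[OF P] ..
  then interpret prob_vec_mode W P w0 .
  have "(P w0)\<^sup>2 \<le> (\<Sum>w\<in>W. (P w)\<^sup>2)"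
    using finite_W mode_mem by (intro member_le_sum) auto
  moreover have "1 - 2 * Delta W P \<le> (P w0)\<^sup>2"
    unfolding mode_eq by (simp add: power2_eq_square algebra_simps)
  ultimately show ?thesis
    by simp
qed

context prob_vec_mode
begin

lemma Ent_split: "Ent W P = P w0 * ln (1 / P w0) + (\<Sum>w\<in>rest. P w * ln (1 / P w))"
  unfolding Ent_eq_sum_support[OF prob_vec] sum_support_split ..

lemma mode_entropy_le: "P w0 * ln (1 / P w0) \<le> Delta W P"
proof -
  have "ln (1 / P w0) \<le> 1 / P w0 - 1"
    using mode_pos by (intro ln_le_minus_one) simp
  then have "P w0 * ln (1 / P w0) \<le> P w0 * (1 / P w0 - 1)"
    using mode_pos by (intro mult_left_mono) auto
  also have "\<dots> = 1 - P w0"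
    using mode_pos by (simp add: field_simps)
  finally show ?thesis
    using mode_eq by simp
qed

lemma Delta_ln_inverse_le_rest_entropy:
  "Delta W P * ln (1 / Delta W P) \<le> (\<Sum>w\<in>rest. P w * ln (1 / P w))"
proof -
  have "Delta W P * ln (1 / Delta W P) = (\<Sum>w\<in>rest. P w * ln (1 / Delta W P))"
    unfolding sum_rest[symmetric] by (simp add: sum_distrib_right)
  also have "\<dots> \<le> (\<Sum>w\<in>rest. P w * ln (1 / P w))"
  proof (intro sum_mono mult_left_mono)
    fix w assume "w \<in> rest"
    then have "0 < P w" "P w \<le> Delta W P" using rest_bounds by auto
    then show "ln (1 / Delta W P) \<le> ln (1 / P w)" "0 \<le> P w"
      by (auto intro!: ln_mono divide_left_mono)
  qed
  finally show ?thesis .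
qed

lemma rest_entropy_le:
  "(\<Sum>w\<in>rest. P w * ln (1 / P w)) \<le> Delta W P * ln (card W / Delta W P)"
proof -
  have "\<And>w. w \<in> rest \<Longrightarrow> 0 < P w" using rest_bounds by blast
  from sum_mult_ln_inverse_le[of rest P "card W", OF finite_rest this card_rest_le] show ?thesis
    unfolding sum_rest .
qed

end

lemma Delta_ln_inverse_le_Ent:
  assumes P: "prob_vec W P"
  shows "Delta W P * ln (1 / Delta W P) \<le> Ent W P"
proof -
  obtain w0 where "prob_vec_mode W P w0"
    using prob_vec_mode_exists[OF P] ..
  then interpret prob_vec_mode W P w0 .
  have "0 \<le> P w0 * ln (1 / P w0)"
    using mode_pos prob_vec_le_one[OF prob_vec mode_mem] by simp
  then show ?thesis
    unfolding Ent_split using Delta_ln_inverse_le_rest_entropy by linarith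
qed

lemma two_le_ln_inverse:
  fixes x :: real
  assumes "0 < x" "x \<le> exp (-2)"
  shows "2 \<le> ln (1 / x)"
proof -
  have "ln x \<le> ln (exp (-2))" using assms by (intro ln_mono) auto
  then show ?thesis using assms by (simp add: ln_div)
qed

lemma two_Delta_le_Delta_ln_inverse:
  assumes "prob_vec W P" "Delta W P \<le> exp (-2)"
  shows "2 * Delta W P \<le> Delta W P * ln (1 / Delta W P)"
proof -
  obtain w0 where "prob_vec_mode W P w0"
    using prob_vec_mode_exists[OF assms(1)] ..
  then have "0 \<le> Delta W P" by (rule prob_vec_mode.Delta_nonneg)
  then show ?thesis
    using two_le_ln_inverse[OF _ assms(2)] by (cases "Delta W P = 0") auto
qed

lemma Ent_le_Delta_ln_inverse:
  assumes P: "prob_vec W P" and Delta: "Delta W P \<le> exp (-2)"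
  shows "Ent W P \<le> (3 / 2 + ln (card W) / 2) * (Delta W P * ln (1 / Delta W P))"
proof -
  obtain w0 where "prob_vec_mode W P w0"
    using prob_vec_mode_exists[OF P] ..
  then interpret prob_vec_mode W P w0 .
  define D where "D = Delta W P"
  have Ent: "Ent W P \<le> D + D * ln (card W / D)"
    unfolding Ent_split D_def using mode_entropy_le rest_entropy_le by linarith
  show ?thesis
  proof (cases "D = 0")
    case True
    then show ?thesis using Ent unfolding D_def by simp
  next
    case False
    then have D: "0 < D" using Delta_nonneg unfolding D_def by simp
    have "0 < card W" using finite_W mode_mem by (auto simp: card_gt_0_iff)
    then have "ln (card W / D) = ln (card W) + ln (1 / D)" using D by (simp add: ln_div)
    moreover have "2 * D \<le> D * ln (1 / D)" "0 \<le> ln (card W)"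
      using two_Delta_le_Delta_ln_inverse[OF P Delta] \<open>0 < card W\<close> unfolding D_def by auto
    moreover from this have "2 * D * ln (card W) \<le> D * ln (1 / D) * ln (card W)"
      by (intro mult_right_mono)
    ultimately show ?thesis
      using Ent unfolding D_def[symmetric] by (simp add: algebra_simps)
  qed
qed

section \<open>Comparison of the gaps with \<open>\<Delta>\<close> and the entropy\<close>

lemma E1_minus_E0_collision_bounds:
  assumes P: "prob_vec W P" and gm [measurable]: "g \<in> borel_measurable borel"
    and g: "set_integrable lborel {0<..<1} g"
    and lo: "\<And>a. 1 \<le> a \<Longrightarrow> lo * (1 - 1 / a) / a \<le> beta_gap g a"
    and hi: "\<And>a. 1 \<le> a \<Longrightarrow> beta_gap g a \<le> hi * (1 - 1 / a) / a"
  shows "lo * (1 - (\<Sum>w\<in>W. (P w)\<^sup>2)) \<le> E1 W P g - E0 g"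
    and "E1 W P g - E0 g \<le> hi * (1 - (\<Sum>w\<in>W. (P w)\<^sup>2))"
proof -
  let ?S = "{w\<in>W. P w > 0}"
  have a: "1 \<le> 1 / P w" and weight: "c * (1 - 1 / (1 / P w)) / (1 / P w) = c * (P w * (1 - P w))"
    if "w \<in> ?S" for w c
    using that prob_vec_le_one[OF P] by (auto simp: field_simps)
  have collision: "c * (1 - (\<Sum>w\<in>W. (P w)\<^sup>2)) = (\<Sum>w\<in>?S. c * (P w * (1 - P w)))" for c
    by (simp only: sum_distrib_left[symmetric] sum_support_mult_one_minus[OF P])
  have "lo * (P w * (1 - P w)) \<le> beta_gap g (1 / P w)"
    and "beta_gap g (1 / P w) \<le> hi * (P w * (1 - P w))" if "w \<in> ?S" for w
    using lo[OF a[OF that]] hi[OF a[OF that]] unfolding weight[OF that] .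
  then show "lo * (1 - (\<Sum>w\<in>W. (P w)\<^sup>2)) \<le> E1 W P g - E0 g"
    and "E1 W P g - E0 g \<le> hi * (1 - (\<Sum>w\<in>W. (P w)\<^sup>2))"
    unfolding collision E1_minus_E0_eq_sum_beta_gap[OF P gm g] by (auto intro: sum_mono)
qed

lemma E1_minus_E0_h_log:
  assumes P: "prob_vec W P"
  shows "E1 W P h_log - E0 h_log = 1 - (\<Sum>w\<in>W. (P w)\<^sup>2)"
proof -
  have "\<And>a. 1 \<le> a \<Longrightarrow> 1 * (1 - 1 / a) / a \<le> beta_gap h_log a"
    "\<And>a. 1 \<le> a \<Longrightarrow> beta_gap h_log a \<le> 1 * (1 - 1 / a) / a"
    by (simp_all add: beta_gap_h_log)
  from E1_minus_E0_collision_bounds[OF P h_log_borel_measurable set_integrable_h_log this]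
  show ?thesis by simp
qed

lemma E1_minus_E0_h_opt_bounds:
  fixes D0 :: real
  assumes "0 < D0" "D0 < 1"
  obtains C1 C2 where "0 < C1" "0 < C2"
    "\<And>W P. prob_vec W P \<Longrightarrow> C1 * Delta W P \<le> E1 W P (h_opt D0) - E0 (h_opt D0)"
    "\<And>W P. prob_vec W P \<Longrightarrow> E1 W P (h_opt D0) - E0 (h_opt D0) \<le> C2 * Delta W P"
proof -
  obtain lo hi where lo: "0 < lo" and hi: "0 < hi"
    and int: "set_integrable lborel {0<..<1} (h_opt D0)"
    and bounds: "\<And>a. 1 \<le> a \<Longrightarrow> lo * (1 - 1 / a) / a \<le> beta_gap (h_opt D0) a"
      "\<And>a. 1 \<le> a \<Longrightarrow> beta_gap (h_opt D0) a \<le> hi * (1 - 1 / a) / a"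
    using beta_gap_h_opt[OF assms] by blast
  show ?thesis
  proof (rule that[of lo "2 * hi"])
    fix W P assume P: "prob_vec W P"
    note gap = E1_minus_E0_collision_bounds[OF P h_opt_borel_measurable int bounds]
    show "lo * Delta W P \<le> E1 W P (h_opt D0) - E0 (h_opt D0)"
      using gap(1) mult_left_mono[OF Delta_le_one_minus_sum_squares[OF P], of lo] lo by linarith
    show "E1 W P (h_opt D0) - E0 (h_opt D0) \<le> 2 * hi * Delta W P"
      using gap(2) mult_left_mono[OF one_minus_sum_squares_le_two_Delta[OF P], of hi] hi by linarith
  qed (use lo hi in auto)
qed

lemma delta_minus_F1_eq_sum:
  assumes P: "prob_vec W P"
  shows "d - F1 W P d = (\<Sum>w\<in>{w\<in>W. P w > 0}. P w * (d - d powr (1 / P w)))"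
proof -
  have "F1 W P d = (\<Sum>w\<in>{w\<in>W. P w > 0}. P w * d powr (1 / P w))"
    unfolding F1_def by (rule prob_vec_sum_support[OF P, symmetric]) simp
  then show ?thesis
    using prob_vec_sum_support_eq_one[OF P]
    by (simp add: right_diff_distrib sum_subtractf sum_distrib_right[symmetric])
qed

lemma E1_minus_E0_h_ind:
  assumes P: "prob_vec W P" and d: "0 < d" "d < 1"
  shows "E1 W P (h_ind d) - E0 (h_ind d) = d - F1 W P d"
  unfolding E1_minus_E0_eq_sum_beta_gap[OF P h_ind_borel_measurable set_integrable_h_ind]
    delta_minus_F1_eq_sum[OF P]
  using d by (intro sum.cong) (auto simp: beta_gap_h_ind)

lemma delta_minus_F1_lower:
  assumes P: "prob_vec W P" and d: "0 < d" "d < 1" and c: "0 < c" "Delta W P \<le> c"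
  shows "(d - d powr (1 / c)) * Delta W P \<le> d - F1 W P d"
proof -
  obtain w0 where "prob_vec_mode W P w0"
    using prob_vec_mode_exists[OF P] ..
  then interpret prob_vec_mode W P w0 .
  have term_nonneg: "0 \<le> P w * (d - d powr (1 / P w))" if "0 < P w" "P w \<le> 1" for w
  proof -
    have "d powr (1 / P w) \<le> d powr 1"
      using that d by (intro powr_mono') (auto simp: field_simps)
    then show ?thesis using that d by simp
  qed
  have "(d - d powr (1 / c)) * Delta W P = (\<Sum>w\<in>rest. P w * (d - d powr (1 / c)))"
    by (simp add: sum_rest[symmetric] sum_distrib_right mult.commute)
  also have "\<dots> \<le> (\<Sum>w\<in>rest. P w * (d - d powr (1 / P w)))"
  proof (intro sum_mono mult_left_mono)
    fix w assume w: "w \<in> rest"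
    then have "1 / c \<le> 1 / P w" using rest_bounds c by (intro divide_left_mono) force+
    then show "d - d powr (1 / c) \<le> d - d powr (1 / P w)"
      using d by (simp add: powr_mono')
  qed (use rest_bounds in force)
  also have "\<dots> \<le> d - F1 W P d"
    unfolding delta_minus_F1_eq_sum[OF P] sum_support_split
    using term_nonneg[OF mode_pos prob_vec_le_one[OF prob_vec mode_mem]] by simp
  finally show ?thesis .
qed

lemma delta_minus_F1_upper:
  assumes P: "prob_vec W P" and d: "0 < d" "d < 1" and Delta: "Delta W P \<le> 1 / 2"
  shows "d - F1 W P d \<le> 3 * Delta W P"
proof -
  obtain w0 where "prob_vec_mode W P w0"
    using prob_vec_mode_exists[OF P] ..
  then interpret prob_vec_mode W P w0 .
  define m where "m = 1 / P w0 - 1"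
  have m: "0 \<le> m" and m_eq: "1 / P w0 = m + 1"
    using mode_pos prob_vec_le_one[OF prob_vec mode_mem] unfolding m_def by (auto simp: field_simps)
  have "P w0 * (d - d powr (1 / P w0)) \<le> d - d powr (1 / P w0)"
    using diff_powr_add_one_bounds(1)[OF d m] prob_vec_le_one[OF prob_vec mode_mem] mode_pos
    unfolding m_eq by (intro mult_left_le_one_le) auto
  also have "\<dots> \<le> m"
    using diff_powr_add_one_bounds(2)[OF d m] mult_left_le[of "1 - d" m] d m unfolding m_eq
    by linarith
  also have "m = Delta W P / P w0"
    using mode_pos unfolding m_def mode_eq by (simp add: field_simps)
  also have "\<dots> \<le> Delta W P / (1 / 2)"
    using Delta Delta_nonneg mode_eq by (intro divide_left_mono) auto
  finally have mode_term: "P w0 * (d - d powr (1 / P w0)) \<le> 2 * Delta W P" by simp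
  have "(\<Sum>w\<in>rest. P w * (d - d powr (1 / P w))) \<le> (\<Sum>w\<in>rest. P w)"
  proof (intro sum_mono mult_left_le)
    fix w assume "w \<in> rest"
    show "d - d powr (1 / P w) \<le> 1" using d powr_ge_zero[of d "1 / P w"] by linarith
    show "0 \<le> P w" using rest_bounds[OF \<open>w \<in> rest\<close>] by simp
  qed
  with mode_term show ?thesis
    unfolding delta_minus_F1_eq_sum[OF P] sum_support_split sum_rest by simp
qed

lemma E1_minus_E0_h_ars_le_Ent:
  assumes P: "prob_vec W P"
  shows "E1 W P h_ars - E0 h_ars \<le> 2 * Ent W P"
  unfolding E1_minus_E0_eq_sum_beta_gap[OF P h_ars_borel_measurable set_integrable_h_ars]
    Ent_eq_sum_support[OF P] sum_distrib_left
  using prob_vec_le_one[OF P] by (intro sum_mono beta_gap_h_ars_inverse_bounds(2)) auto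

lemma Ent_le_E1_minus_E0_h_ars:
  assumes P: "prob_vec W P" and Delta: "Delta W P \<le> exp (-2)"
  shows "Ent W P \<le> 3 * (E1 W P h_ars - E0 h_ars)"
proof -
  obtain w0 where "prob_vec_mode W P w0"
    using prob_vec_mode_exists[OF P] ..
  then interpret prob_vec_mode W P w0 .
  define R where "R = (\<Sum>w\<in>rest. P w * ln (1 / P w))"
  have "R - Delta W P = (\<Sum>w\<in>rest. P w * ln (1 / P w) - P w)"
    unfolding R_def sum_rest[symmetric] sum_subtractf ..
  also have "\<dots> \<le> (\<Sum>w\<in>rest. beta_gap h_ars (1 / P w))"
    using rest_bounds prob_vec_le_one[OF prob_vec] unfolding rest_def
    by (intro sum_mono beta_gap_h_ars_inverse_bounds(3)) auto
  also have "\<dots> \<le> E1 W P h_ars - E0 h_ars"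
    unfolding E1_minus_E0_eq_sum_beta_gap[OF P h_ars_borel_measurable set_integrable_h_ars]
      sum_support_split
    using beta_gap_h_ars_inverse_bounds(1)[OF mode_pos prob_vec_le_one[OF prob_vec mode_mem]]
    by simp
  finally have "R - Delta W P \<le> E1 W P h_ars - E0 h_ars" .
  moreover have "2 * Delta W P \<le> R"
    using two_Delta_le_Delta_ln_inverse[OF P Delta] Delta_ln_inverse_le_rest_entropy
    unfolding R_def by linarith
  moreover have "Ent W P \<le> Delta W P + R"
    unfolding Ent_split R_def using mode_entropy_le by linarith
  ultimately show ?thesis
    by (simp add: right_diff_distrib)
qed

theorem propositionA2:
  shows "\<exists>c::real. 0 < c \<and> c < 1 \<and>
    (\<forall>n::nat. \<exists>C1 C2 C3 C4 :: real. 0 < C1 \<and> 0 < C2 \<and> 0 < C3 \<and> 0 < C4 \<and>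
       (\<forall>W P. prob_vec W P \<and> card W = n \<and> Delta W P \<le> c \<longrightarrow>
          C1 * Ent W P \<le> E1 W P h_ars - E0 h_ars \<and>
          E1 W P h_ars - E0 h_ars \<le> C2 * Ent W P \<and>
          C3 * (Delta W P * ln (1 / Delta W P)) \<le> Ent W P \<and>
          Ent W P \<le> C4 * (Delta W P * ln (1 / Delta W P)))) \<and>
    (\<exists>C1 C2 :: real. 0 < C1 \<and> 0 < C2 \<and>
       (\<forall>W P. prob_vec W P \<and> Delta W P \<le> c \<longrightarrow>
          E1 W P h_log - E0 h_log = 1 - (\<Sum>w\<in>W. (P w)\<^sup>2) \<and>
          C1 * Delta W P \<le> 1 - (\<Sum>w\<in>W. (P w)\<^sup>2) \<and>
          1 - (\<Sum>w\<in>W. (P w)\<^sup>2) \<le> C2 * Delta W P)) \<and>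
    (\<forall>\<delta>::real. 0 < \<delta> \<and> \<delta> < 1 \<longrightarrow>
       (\<exists>C1 C2 :: real. 0 < C1 \<and> 0 < C2 \<and>
         (\<forall>W P. prob_vec W P \<and> Delta W P \<le> c \<longrightarrow>
            E1 W P (h_ind \<delta>) - E0 (h_ind \<delta>) = \<delta> - F1 W P \<delta> \<and>
            C1 * Delta W P \<le> \<delta> - F1 W P \<delta> \<and>
            \<delta> - F1 W P \<delta> \<le> C2 * Delta W P))) \<and>
    (\<forall>D0::real. 0 < D0 \<and> D0 < 1 \<longrightarrow>
       (\<exists>C1 C2 :: real. 0 < C1 \<and> 0 < C2 \<and>
         (\<forall>W P. prob_vec W P \<and> Delta W P \<le> c \<longrightarrow>
            C1 * Delta W P \<le> E1 W P (h_opt D0) - E0 (h_opt D0) \<and>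
            E1 W P (h_opt D0) - E0 (h_opt D0) \<le> C2 * Delta W P)))"
proof -
  \<comment> \<open>\<open>c = exp (-2)\<close> gives \<open>2 \<le> ln (1 / \<Delta>)\<close> and \<open>\<Delta> \<le> 1 / 2\<close>, all the smallness the bounds need.\<close>
  have "2 \<le> exp (2::real)"
    using exp_ge_add_one_self[of 2] by simp
  then have c: "0 < exp (-2::real)" "exp (-2::real) \<le> 1 / 2"
    by (simp_all add: exp_minus field_simps)
  have ln_card_nonneg: "0 \<le> ln (real n)" for n :: nat
    by (cases n) auto
  have ind_const: "0 < d - d powr (1 / exp (-2))" if "0 < d" "d < 1" for d :: real
    using powr_less_mono'[of d 1 "1 / exp (-2)"] that c by (simp add: field_simps)
  show ?thesis
    apply (rule exI[of _ "exp (-2)"], intro conjI allI impI)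
    subgoal by simp
    subgoal by simp
    subgoal for n
      apply (rule exI[of _ "1 / 3"], rule exI[of _ 2], rule exI[of _ 1],
          rule exI[of _ "3 / 2 + ln (real n) / 2"])
      using ln_card_nonneg[of n]
      by (auto simp: E1_minus_E0_h_ars_le_Ent Delta_ln_inverse_le_Ent Ent_le_Delta_ln_inverse
          dest: Ent_le_E1_minus_E0_h_ars)
    subgoal
      by (rule exI[of _ 1], rule exI[of _ 2])
        (auto simp: E1_minus_E0_h_log Delta_le_one_minus_sum_squares
          one_minus_sum_squares_le_two_Delta)
    subgoal for \<delta>
      apply (rule exI[of _ "\<delta> - \<delta> powr (1 / exp (-2))"], rule exI[of _ 3])
      using c ind_const[of \<delta>]
      by (auto simp: E1_minus_E0_h_ind intro: delta_minus_F1_lower delta_minus_F1_upper)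
    subgoal for D0
      by (rule E1_minus_E0_h_opt_bounds[of D0]) blast+
    done
qed

end
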